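(* Let $n\geq1$ and let $e\in\mathbf{I}_n(\geq,\geq,-)$ have parameters $(p,q)$. Then there are exactly $p+q$ sequences $f\in\mathbf{I}_{n+1}(\geq,\geq,-)$ whose first $n$ entries form $e$; these are $f=(e_1,\ldots,e_n,b)$ with $\beta(e)<b\leq n$, and, as $b$ runs from $\beta(e)+1$ to $n$, their parameters are respectively $$(p-1,q+1),(p-2,q+1),\ldots,(0,q+1),\ (p+1,q),(p+2,q-1),\ldots,(p+q,1).$$
   Context: $\mathbf{I}_n$ is the set of inversion sequences $e=(e_1,\ldots,e_n)$ with $0\leq e_i<i$. $\mathbf{I}_n(\geq,\geq,-)$ is the set of $e\in\mathbf{I}_n$ with no indices $i<j<k$ such that $e_i\geq e_j\geq e_k$. An entry $e_i$ is a left-to-right maximum if $e_i>e_j$ for all $j<i$. Let $\alpha(e)=\max\{e_1,\ldots,e_n\}$ and let $\beta(e)$ be the largest element of $\{e_i: e_i \text{ is not a left-to-right maximum}\}\cup\{-1\}$. The parameters of $e\in\mathbf{I}_n(\geq,\geq,-)$ are $(p,q)$ with $p=\alpha(e)-\beta(e)$ and $q=n-\alpha(e)$. (When $p=0$ the first list is empty.) *)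

theory Defs
  imports Main
begin

(* Inversion sequences are lists of naturals, 0-indexed: the paper's e_i is e ! (i-1),
   so the condition 0 <= e_i < i becomes e ! i <= i. *)
definition inv_seq :: "nat \<Rightarrow> nat list \<Rightarrow> bool" where
  "inv_seq n e \<longleftrightarrow> length e = n \<and> (\<forall>i<n. e ! i < i + 1)"

definition I_gg :: "nat \<Rightarrow> nat list set" where
  "I_gg n = {e. inv_seq n e \<and>
     \<not> (\<exists>i j k. i < j \<and> j < k \<and> k < n \<and> e ! i \<ge> e ! j \<and> e ! j \<ge> e ! k)}"

definition ltr_max :: "nat list \<Rightarrow> nat \<Rightarrow> bool" where
  "ltr_max e i \<longleftrightarrow> (\<forall>j<i. e ! j < e ! i)"

definition alpha :: "nat list \<Rightarrow> nat" where
  "alpha e = Max (set e)"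

definition beta :: "nat list \<Rightarrow> int" where
  "beta e = Max ({int (e ! i) | i. i < length e \<and> \<not> ltr_max e i} \<union> {-1})"

definition params :: "nat list \<Rightarrow> nat \<times> nat" where
  "params e = (nat (int (alpha e) - beta e), length e - alpha e)"

end

theory Submission
  imports Defs
begin

text \<open>Appending b to e creates a new pattern e_i \<ge> e_j \<ge> b exactly when b is at most some
  e_j that is not a left-to-right maximum, i.e. when b \<le> \<beta>(e). So the admissible last entries
  are \<beta>(e) < b \<le> n. If b \<le> \<alpha>(e), then b becomes the new \<beta> and \<alpha> is unchanged; if b > \<alpha>(e),
  then b is the new \<alpha> and \<beta> is unchanged.\<close>

definition nonltr_values :: "nat list \<Rightarrow> int set" where
  "nonltr_values e = (\<lambda>i. int (e ! i)) ` {i. i < length e \<and> \<not> ltr_max e i}"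

lemma finite_nonltr_values: "finite (nonltr_values e)"
  unfolding nonltr_values_def by simp

lemma beta_eq_Max_nonltr_values: "beta e = Max (nonltr_values e \<union> {-1})"
proof -
  have "{int (e ! i) | i. i < length e \<and> \<not> ltr_max e i} = nonltr_values e"
    unfolding nonltr_values_def by blast
  then show ?thesis unfolding beta_def by simp
qed

lemma beta_ge_minus_one: "beta e \<ge> -1"
  unfolding beta_eq_Max_nonltr_values by (simp add: finite_nonltr_values)

lemma not_ltr_max_iff: "\<not> ltr_max e j \<longleftrightarrow> (\<exists>i<j. e ! j \<le> e ! i)"
  unfolding ltr_max_def by auto

lemma le_beta_iff: "int b \<le> beta e \<longleftrightarrow> (\<exists>j<length e. \<not> ltr_max e j \<and> b \<le> e ! j)"
  unfolding beta_eq_Max_nonltr_values using finite_nonltr_values[of e]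
  by (auto simp: Max_ge_iff nonltr_values_def)

lemma le_alpha: "x \<in> set e \<Longrightarrow> x \<le> alpha e"
  unfolding alpha_def by simp

lemma alpha_in_set: "e \<noteq> [] \<Longrightarrow> alpha e \<in> set e"
  unfolding alpha_def by simp

lemma alpha_less_if_inv_seq:
  assumes "inv_seq n e" "n \<ge> 1"
  shows "alpha e < n"
proof -
  from assms(1) have "\<forall>x\<in>set e. x < n"
    by (fastforce simp: inv_seq_def in_set_conv_nth)
  moreover from assms have "e \<noteq> []" by (auto simp: inv_seq_def)
  ultimately show ?thesis using alpha_in_set by blast
qed

lemma beta_le_alpha: "beta e \<le> int (alpha e)"
proof -
  have "\<forall>x\<in>nonltr_values e \<union> {-1}. x \<le> int (alpha e)"
    by (auto simp: nonltr_values_def le_alpha)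
  then show ?thesis
    unfolding beta_eq_Max_nonltr_values using finite_nonltr_values[of e] by simp
qed

lemma alpha_snoc: "e \<noteq> [] \<Longrightarrow> alpha (e @ [b]) = max b (alpha e)"
  unfolding alpha_def by simp

lemma ltr_max_snoc: "i < length e \<Longrightarrow> ltr_max (e @ [b]) i = ltr_max e i"
  unfolding ltr_max_def by (auto simp: nth_append)

lemma ltr_max_snoc_last_iff:
  assumes "e \<noteq> []"
  shows "ltr_max (e @ [b]) (length e) \<longleftrightarrow> alpha e < b"
proof -
  have "ltr_max (e @ [b]) (length e) \<longleftrightarrow> (\<forall>x\<in>set e. x < b)"
    unfolding ltr_max_def by (fastforce simp: nth_append in_set_conv_nth)
  also have "\<dots> \<longleftrightarrow> alpha e < b"
    using alpha_in_set[OF assms] le_alpha[of _ e] by (auto intro: le_less_trans)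
  finally show ?thesis .
qed

lemma nonltr_values_snoc:
  assumes "e \<noteq> []"
  shows "nonltr_values (e @ [b]) =
    nonltr_values e \<union> (if alpha e < b then {} else {int b})"
proof -
  have "{i. i < length (e @ [b]) \<and> \<not> ltr_max (e @ [b]) i} =
      {i. i < length e \<and> \<not> ltr_max e i} \<union> (if alpha e < b then {} else {length e})"
    using ltr_max_snoc[of _ e b] ltr_max_snoc_last_iff[OF assms, of b]
    by (auto simp: less_Suc_eq)
  then show ?thesis unfolding nonltr_values_def by (auto simp: nth_append)
qed

lemma beta_snoc:
  assumes "e \<noteq> []" "beta e < int b"
  shows "beta (e @ [b]) = (if alpha e < b then beta e else int b)"
proof (cases "alpha e < b")
  case True
  then show ?thesis
    using nonltr_values_snoc[OF assms(1), of b] by (simp add: beta_eq_Max_nonltr_values)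
next
  case False
  have "beta (e @ [b]) = Max (insert (int b) (nonltr_values e \<union> {-1}))"
    using nonltr_values_snoc[OF assms(1), of b] False
    by (simp add: beta_eq_Max_nonltr_values insert_commute)
  also have "\<dots> = max (int b) (beta e)"
    using finite_nonltr_values[of e] by (simp add: beta_eq_Max_nonltr_values)
  finally show ?thesis using False assms(2) by simp
qed

lemma params_snoc_le_alpha:
  assumes "e \<noteq> []" "beta e < int b" "b \<le> alpha e"
  shows "params (e @ [b]) = (alpha e - b, Suc (length e) - alpha e)"
proof -
  have "alpha (e @ [b]) = alpha e" using alpha_snoc[OF assms(1)] assms(3) by simp
  moreover have "beta (e @ [b]) = int b" using beta_snoc[OF assms(1,2)] assms(3) by simp
  ultimately show ?thesis using assms(3) unfolding params_def by (simp add: nat_diff_distrib)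
qed

lemma params_snoc_gt_alpha:
  assumes "e \<noteq> []" "alpha e < b"
  shows "params (e @ [b]) = (nat (int b - beta e), Suc (length e) - b)"
proof -
  have "beta e < int b" using beta_le_alpha[of e] assms(2) by simp
  then have "beta (e @ [b]) = beta e" using beta_snoc[OF assms(1)] assms(2) by simp
  moreover have "alpha (e @ [b]) = b" using alpha_snoc[OF assms(1)] assms(2) by simp
  ultimately show ?thesis unfolding params_def by simp
qed

lemma snoc_pattern_iff:
  fixes e :: "nat list"
  assumes "length e = n"
    and avoid: "\<not> (\<exists>i j k. i < j \<and> j < k \<and> k < n \<and> e ! i \<ge> e ! j \<and> e ! j \<ge> e ! k)"
  shows "(\<exists>i j k. i < j \<and> j < k \<and> k < n + 1 \<and>
            (e @ [b]) ! i \<ge> (e @ [b]) ! j \<and> (e @ [b]) ! j \<ge> (e @ [b]) ! k)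
    \<longleftrightarrow> int b \<le> beta e"
proof -
  \<comment> \<open>a pattern in e @ [b] cannot lie inside e, so it must end at the new entry\<close>
  have "(\<exists>i j k. i < j \<and> j < k \<and> k < n + 1 \<and>
            (e @ [b]) ! i \<ge> (e @ [b]) ! j \<and> (e @ [b]) ! j \<ge> (e @ [b]) ! k)
    \<longleftrightarrow> (\<exists>i j. i < j \<and> j < n \<and> e ! i \<ge> e ! j \<and> e ! j \<ge> b)"
  proof
    assume "\<exists>i j k. i < j \<and> j < k \<and> k < n + 1 \<and>
            (e @ [b]) ! i \<ge> (e @ [b]) ! j \<and> (e @ [b]) ! j \<ge> (e @ [b]) ! k"
    then obtain i j k where ijk: "i < j" "j < k" "k < n + 1"
      "(e @ [b]) ! i \<ge> (e @ [b]) ! j" "(e @ [b]) ! j \<ge> (e @ [b]) ! k"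
      by blast
    have "k = n"
    proof (rule ccontr)
      assume "k \<noteq> n"
      with ijk have "k < n" by simp
      with ijk assms(1) have "e ! i \<ge> e ! j" "e ! j \<ge> e ! k" by (auto simp: nth_append)
      with avoid ijk \<open>k < n\<close> show False by blast
    qed
    with ijk assms(1) show "\<exists>i j. i < j \<and> j < n \<and> e ! i \<ge> e ! j \<and> e ! j \<ge> b"
      by (auto simp: nth_append)
  next
    assume "\<exists>i j. i < j \<and> j < n \<and> e ! i \<ge> e ! j \<and> e ! j \<ge> b"
    then obtain i j where "i < j" "j < n" "e ! i \<ge> e ! j" "e ! j \<ge> b" by blast
    with assms(1) show "\<exists>i j k. i < j \<and> j < k \<and> k < n + 1 \<and>
            (e @ [b]) ! i \<ge> (e @ [b]) ! j \<and> (e @ [b]) ! j \<ge> (e @ [b]) ! k"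
      by (intro exI[of _ i] exI[of _ j] exI[of _ n]) (auto simp: nth_append)
  qed
  also have "\<dots> \<longleftrightarrow> int b \<le> beta e"
    unfolding le_beta_iff not_ltr_max_iff assms(1) by blast
  finally show ?thesis .
qed

lemma snoc_in_I_gg_iff:
  assumes "e \<in> I_gg n"
  shows "e @ [b] \<in> I_gg (n + 1) \<longleftrightarrow> beta e < int b \<and> b \<le> n"
proof -
  from assms have len: "length e = n" and inv: "\<forall>i<n. e ! i < i + 1"
    and avoid: "\<not> (\<exists>i j k. i < j \<and> j < k \<and> k < n \<and> e ! i \<ge> e ! j \<and> e ! j \<ge> e ! k)"
    by (auto simp: I_gg_def inv_seq_def)
  have inv_snoc: "inv_seq (n + 1) (e @ [b]) \<longleftrightarrow> b \<le> n"
    using inv len by (auto simp: inv_seq_def nth_append less_Suc_eq)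
  show ?thesis
    unfolding I_gg_def mem_Collect_eq inv_snoc snoc_pattern_iff[OF len avoid] by linarith
qed

lemma eq_snoc_if_take:
  assumes "length f = n + 1" "take n f = e"
  shows "f = e @ [f ! n]"
proof -
  from assms(1) have "drop n f = [f ! n]"
    by (simp add: Cons_nth_drop_Suc[symmetric])
  then show ?thesis using assms(2) by (metis append_take_drop_id)
qed

lemma I_gg_extensions:
  assumes "e \<in> I_gg n"
  shows "{f \<in> I_gg (n + 1). take n f = e} = {e @ [b] | b. beta e < int b \<and> b \<le> n}"
proof -
  have len: "length e = n" using assms by (simp add: I_gg_def inv_seq_def)
  show ?thesis
  proof (intro set_eqI iffI)
    fix f assume f: "f \<in> {f \<in> I_gg (n + 1). take n f = e}"
    then have "length f = n + 1" by (simp add: I_gg_def inv_seq_def)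
    with f have f_eq: "f = e @ [f ! n]" by (intro eq_snoc_if_take) simp_all
    with f have "e @ [f ! n] \<in> I_gg (n + 1)" by simp
    then have "beta e < int (f ! n) \<and> f ! n \<le> n" by (simp only: snoc_in_I_gg_iff[OF assms])
    with f_eq show "f \<in> {e @ [b] | b. beta e < int b \<and> b \<le> n}" by blast
  next
    fix f assume "f \<in> {e @ [b] | b. beta e < int b \<and> b \<le> n}"
    then obtain b where b: "f = e @ [b]" "beta e < int b" "b \<le> n" by blast
    then have "f \<in> I_gg (n + 1)" using snoc_in_I_gg_iff[OF assms] by simp
    moreover have "take n f = e" using b(1) len by simp
    ultimately show "f \<in> {f \<in> I_gg (n + 1). take n f = e}" by simp
  qed
qed

lemma card_I_gg_extensions:
  assumes "e \<in> I_gg n"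
  shows "card {f \<in> I_gg (n + 1). take n f = e} = nat (int n - beta e)"
proof -
  have "{e @ [b] | b. beta e < int b \<and> b \<le> n} = (\<lambda>b. e @ [b]) ` {nat (beta e + 1)..n}"
    using beta_ge_minus_one[of e] by auto
  then have "card {f \<in> I_gg (n + 1). take n f = e} = card {nat (beta e + 1)..n}"
    unfolding I_gg_extensions[OF assms] by (simp add: card_image inj_on_def)
  also have "\<dots> = nat (int n - beta e)" using beta_ge_minus_one[of e] by simp
  finally show ?thesis .
qed

lemma params_snoc_beta_plus:
  assumes "e \<noteq> []" "alpha e \<le> length e" "params e = (p, q)" "1 \<le> k"
  shows "params (e @ [nat (beta e + int k)]) =
    (if k \<le> p then (p - k, q + 1) else (k, q + 1 - (k - p)))"
proof -
  define b where "b = nat (beta e + int k)"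
  have b: "int b = beta e + int k" using beta_ge_minus_one[of e] assms(4) by (simp add: b_def)
  have p: "int p = int (alpha e) - beta e" and q: "q = length e - alpha e"
    using assms(3) beta_le_alpha[of e] by (auto simp: params_def)
  show ?thesis
  proof (cases "k \<le> p")
    case True
    with b p assms(4) have "beta e < int b" "b \<le> alpha e" by linarith+
    from params_snoc_le_alpha[OF assms(1) this] show ?thesis
      using True b p q assms(2) by (simp add: b_def[symmetric] Suc_diff_le; arith)
  next
    case False
    with b p have "alpha e < b" by linarith
    from params_snoc_gt_alpha[OF assms(1) this] show ?thesis
      using False b p q assms(2) by (simp add: b_def[symmetric] Suc_diff_le; arith)
  qed
qed

theorem lemma2p2:
  fixes n p q :: nat and e :: "nat list"
  assumes "n \<ge> 1" and "e \<in> I_gg n" and "params e = (p, q)"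
  shows "card {f \<in> I_gg (n + 1). take n f = e} = p + q
    \<and> {f \<in> I_gg (n + 1). take n f = e} = {e @ [b] | b. beta e < int b \<and> b \<le> n}
    \<and> (\<forall>k::nat. 1 \<le> k \<and> k \<le> p + q \<longrightarrow>
          params (e @ [nat (beta e + int k)]) =
            (if k \<le> p then (p - k, q + 1) else (k, q + 1 - (k - p))))"
proof -
  have len: "length e = n" using assms(2) by (simp add: I_gg_def inv_seq_def)
  then have "e \<noteq> []" using assms(1) by auto
  have alpha: "alpha e < n"
    using assms(1,2) by (intro alpha_less_if_inv_seq) (auto simp: I_gg_def)
  have "p + q = nat (int n - beta e)"
    using assms(3) beta_le_alpha[of e] len alpha by (auto simp: params_def)
  with card_I_gg_extensions[OF assms(2)] I_gg_extensions[OF assms(2)]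
    params_snoc_beta_plus[OF \<open>e \<noteq> []\<close> _ assms(3)] len alpha
  show ?thesis by simp
qed

end
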